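(* Consider the case of independent observations $X_t=\mathbf{A}_0Z_t$, so that the limiting spectral distribution of $\Sigma=\mathrm{Var}(X_t)$ is $F^{\Sigma}=\sum_{j=1}^J\omega_j^0\delta_{\lambda_j^0}$ with $\boldsymbol\omega^0\in\Delta^J$ and distinct nonnegative reals $\lambda_1^0,\dots,\lambda_J^0$; here the coordinate spectral densities are constant: $h(\lambda_j^0,\theta)\equiv\lambda_j^0$. Let $p/n\to c\in(0,\infty)$, let $\mathcal{G}=\{g_0\}$ with $g_0(\theta)\equiv1$, and let $\mathcal{Z}=\{z_1,\dots,z_D\}$ be a finite set of points in a closed bounded subset of $\mathbb{C}^+$ with $D\ge J$ and $z_1,\dots,z_D$ distinct. Let $\mathbf{B}$ be any $J\times(J-1)$ matrix of rank $J-1$ with $\mathbf{B}^T\mathbf{1}_J=0$. Then $\mathbf{B}^T\mathcal{M}_{\mathcal{G},\mathcal{Z}}(\boldsymbol\Lambda_J^0,\boldsymbol\omega^0)\mathbf{B}$ is positive definite, where $$\mathcal{M}_{\mathcal{G},\mathcal{Z}}(\boldsymbol\Lambda_J^0,\boldsymbol\omega^0)=\frac{1}{|\mathcal{Z}|}\sum_{z\in\mathcal{Z}}\Big(\frac{1}{2\pi}\int_0^{2\pi}\frac{\mathbf{v}^0(z)\,d\theta}{(cM^0(z)-z)^2}\Big)\Big(\frac{1}{2\pi}\int_0^{2\pi}\frac{\mathbf{v}^0(z)\,d\theta}{(cM^0(z)-z)^2}\Big)^*,$$ with $\mathbf{v}^0(z)=\big(\lambda_j^0/(1+K^0(\lambda_j^0,z))\big)_{j=1}^J$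 and $M^0(z)=\sum_{j=1}^J\omega_j^0\lambda_j^0/(1+K^0(\lambda_j^0,z))$.
   Context: $\Delta^J=\{\mathbf{x}\in\mathbb{R}^J:x_j\ge0,\sum_jx_j=1\}$, $\mathbb{C}^+=\{z:\Im z>0\}$. $K^0$ and $M^0$ are the limiting objects for $g_0\equiv1$: $K^0(\lambda,z)=\frac{1}{2\pi}\int_0^{2\pi}\frac{\lambda\,d\theta}{cM^0(z)-z}=\lambda S^0(z)$ where $S^0(z)=\frac{1}{cM^0(z)-z}$ is the Stieltjes transform of the limiting spectral distribution of $\frac1n\tilde{\mathbf{X}}_n^*\tilde{\mathbf{X}}_n$ (equivalently of the $n\times n$ companion of the sample covariance matrix) under the true distribution $\sum_j\omega_j^0\delta_{\lambda_j^0}$, and $K^0(\lambda,\cdot)$ is required to be a Stieltjes transform of a measure of total mass $\lambda$. This is the matrix whose positive definiteness (after compression by $\mathbf{B}$) is a sufficient condition for consistency of the $L^2$ minimum-Stieltjes-distance estimator of the weights $\boldsymbol\omega^0$. *)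

theory Defs
  imports "HOL-Analysis.Analysis" "Jordan_Normal_Form.DL_Rank"
begin

definition stieltjes :: "real measure \<Rightarrow> complex \<Rightarrow> complex" where
  "stieltjes \<mu> z = (\<integral> t. 1 / (complex_of_real t - z) \<partial>\<mu>)"

text \<open>K^0(lambda,z) = (1/2pi) int_0^{2pi} lambda/(c M^0(z) - z) dtheta = lambda S^0(z).\<close>
definition K0 :: "(complex \<Rightarrow> complex) \<Rightarrow> real \<Rightarrow> complex \<Rightarrow> complex" where
  "K0 S lam z = lam * S z"

definition M0 :: "nat \<Rightarrow> (nat \<Rightarrow> real) \<Rightarrow> (nat \<Rightarrow> real) \<Rightarrow> (complex \<Rightarrow> complex) \<Rightarrow> complex \<Rightarrow> complex" where
  "M0 J \<omega> lam S z = (\<Sum>j<J. \<omega> j * lam j / (1 + K0 S (lam j) z))"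

definition v0 :: "(nat \<Rightarrow> real) \<Rightarrow> (complex \<Rightarrow> complex) \<Rightarrow> complex \<Rightarrow> nat \<Rightarrow> complex" where
  "v0 lam S z j = lam j / (1 + K0 S (lam j) z)"

definition wvec :: "nat \<Rightarrow> real \<Rightarrow> (nat \<Rightarrow> real) \<Rightarrow> (nat \<Rightarrow> real) \<Rightarrow> (complex \<Rightarrow> complex)
    \<Rightarrow> complex \<Rightarrow> nat \<Rightarrow> complex" where
  "wvec J c \<omega> lam S z j = complex_of_real (1 / (2 * pi)) *
     integral {0..2*pi} (\<lambda>\<theta>::real. v0 lam S z j / (complex_of_real c * M0 J \<omega> lam S z - z)\<^sup>2)"

definition Mmat :: "nat \<Rightarrow> real \<Rightarrow> (nat \<Rightarrow> real) \<Rightarrow> (nat \<Rightarrow> real) \<Rightarrow> (complex \<Rightarrow> complex)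
    \<Rightarrow> complex set \<Rightarrow> complex mat" where
  "Mmat J c \<omega> lam S Z = mat J J (\<lambda>(i,k). (1 / of_nat (card Z)) *
     (\<Sum>z\<in>Z. wvec J c \<omega> lam S z i * cnj (wvec J c \<omega> lam S z k)))"

definition pos_def_cmat :: "complex mat \<Rightarrow> bool" where
  "pos_def_cmat A \<longleftrightarrow> A \<in> carrier_mat (dim_row A) (dim_row A) \<and>
     (\<forall>x \<in> carrier_vec (dim_row A). x \<noteq> 0\<^sub>v (dim_row A) \<longrightarrow>
        (let q = conjugate x \<bullet> (A *\<^sub>v x) in Im q = 0 \<and> Re q > 0))"

end

theory Submission
  imports Defs
begin

(* For Im z > 0 the fixed-point equation S = 1/D with D(z) = c M^0(z) - z forces D(z) to be
   non-real; the integrand of w(z) does not depend on theta, and w_j(z) = 1/D(z) - 1/(D(z) + lambda_j).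
   For x != 0 the vector y = B x is nonzero (full column rank) with entries summing to 0 (B^T 1 = 0),
   and x^* B^T M B x = |Z|^-1 sum_z |sum_j conj(y_j) w_j(z)|^2, where the inner sum equals
   - sum_j conj(y_j) / (D(z) + lambda_j). As D is injective on Z, if all these sums vanished, a
   partial-fraction sum with the J distinct poles -lambda_j would vanish at |Z| >= J points; its
   numerator, a polynomial of degree < J, would be 0, and evaluating it at the poles gives y = 0. *)

definition partial_fraction_numerator :: "nat \<Rightarrow> (nat \<Rightarrow> 'a::field) \<Rightarrow> (nat \<Rightarrow> 'a) \<Rightarrow> 'a poly" where
  "partial_fraction_numerator n a u = (\<Sum>j<n. Polynomial.smult (u j) (\<Prod>i\<in>{..<n}-{j}. [:- a i, 1:]))"

lemma degree_partial_fraction_numerator: "degree (partial_fraction_numerator n a u) \<le> n - 1"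
  unfolding partial_fraction_numerator_def
proof (rule degree_sum_le)
  fix j assume j: "j \<in> {..<n}"
  have "degree (Polynomial.smult (u j) (\<Prod>i\<in>{..<n}-{j}. [:- a i, 1:]))
      \<le> (\<Sum>i\<in>{..<n}-{j}. degree [:- a i, 1:])"
    using degree_prod_sum_le[of "{..<n}-{j}" "\<lambda>i. [:- a i, 1:]"] by (simp add: o_def)
  also have "\<dots> = n - 1" using j by simp
  finally show "degree (Polynomial.smult (u j) (\<Prod>i\<in>{..<n}-{j}. [:- a i, 1:])) \<le> n - 1" .
qed simp

lemma poly_partial_fraction_numerator:
  assumes "\<And>i. i < n \<Longrightarrow> x \<noteq> a i"
  shows "poly (partial_fraction_numerator n a u) x = (\<Prod>i<n. x - a i) * (\<Sum>j<n. u j / (x - a j))"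
proof -
  have "u j * (\<Prod>i\<in>{..<n}-{j}. x - a i) = (\<Prod>i<n. x - a i) * (u j / (x - a j))" if "j < n" for j
    using that assms by (simp add: prod.remove field_simps)
  then show ?thesis
    by (simp add: partial_fraction_numerator_def poly_sum poly_prod sum_distrib_left)
qed

lemma poly_partial_fraction_numerator_pole:
  assumes "j < n"
  shows "poly (partial_fraction_numerator n a u) (a j) = u j * (\<Prod>i\<in>{..<n}-{j}. a j - a i)"
proof -
  have "(\<Sum>k\<in>{..<n}-{j}. u k * (\<Prod>i\<in>{..<n}-{k}. a j - a i)) = 0"
  proof (intro sum.neutral ballI)
    fix k assume "k \<in> {..<n} - {j}"
    then have "(\<Prod>i\<in>{..<n}-{k}. a j - a i) = 0"
      using assms by (intro prod_zero bexI[of _ j]) auto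
    then show "u k * (\<Prod>i\<in>{..<n}-{k}. a j - a i) = 0" by simp
  qed
  then show ?thesis
    using assms by (simp add: partial_fraction_numerator_def poly_sum poly_prod sum.remove)
qed

lemma partial_fraction_sum_eq_0_imp_coeff_eq_0:
  fixes a u :: "nat \<Rightarrow> 'a::field"
  assumes "inj_on a {..<n}" and "n \<le> card T"
    and "\<And>x i. x \<in> T \<Longrightarrow> i < n \<Longrightarrow> x \<noteq> a i"
    and "\<And>x. x \<in> T \<Longrightarrow> (\<Sum>j<n. u j / (x - a j)) = 0"
    and "j < n"
  shows "u j = 0"
proof -
  have "partial_fraction_numerator n a u = 0"
  proof (rule poly_eqI_degree[of T])
    show "poly (partial_fraction_numerator n a u) x = poly 0 x" if "x \<in> T" for x
      using that assms(3,4) by (simp add: poly_partial_fraction_numerator)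
    show "degree (partial_fraction_numerator n a u) < card T"
      using degree_partial_fraction_numerator[of n a u] assms(2,5) by linarith
  qed (use assms(2,5) in simp)
  moreover have "(\<Prod>i\<in>{..<n}-{j}. a j - a i) \<noteq> 0"
    using assms(1,5) by (auto simp: inj_on_def)
  ultimately show ?thesis
    using poly_partial_fraction_numerator_pole[OF assms(5), of a u] by simp
qed

lemma (in vec_space) full_rank_distinct_cols:
  assumes "A \<in> carrier_mat n nc" "rank A = nc"
  shows "distinct (cols A)"
proof (rule ccontr)
  assume nd: "\<not> distinct (cols A)"
  obtain S where S: "maximal S (\<lambda>T. T \<subseteq> set (cols A) \<and> lin_indpt T)"
    using maximal_exists[of "(\<lambda>T. T \<subseteq> set (cols A) \<and> lin_indpt T)" "card (set (cols A))" "{}"]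
    by (meson List.finite_set card_mono empty_iff empty_subsetI finite_lin_indpt2 rev_finite_subset)
  then have "card S \<le> card (set (cols A))" by (simp add: card_mono maximal_def)
  moreover have "card (set (cols A)) < nc"
    using assms(1) nd card_distinct[of "cols A"] card_length[of "cols A"] by fastforce
  ultimately have "card S < nc" by linarith
  then show False using rank_card_indpt[OF assms(1) S] assms(2) by simp
qed

lemma full_col_rank_kernel_trivial:
  fixes A :: "'a::field mat"
  assumes A: "A \<in> carrier_mat n nc" and rank: "vec_space.rank n A = nc"
    and v: "v \<in> carrier_vec nc" and Av: "A *\<^sub>v v = 0\<^sub>v n"
  shows "v = 0\<^sub>v nc"
proof (rule ccontr)
  assume "v \<noteq> 0\<^sub>v nc"
  have "distinct (cols A)" by (rule vec_space.full_rank_distinct_cols[OF A rank])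
  then show False
    using vec_space.lin_depI[OF A v \<open>v \<noteq> 0\<^sub>v nc\<close> Av] vec_space.full_rank_lin_indpt[OF A rank]
    by blast
qed

lemma map_vec_linear_of_real_mult_mat_vec:
  fixes B :: "real mat" and x :: "'a::real_algebra_1 vec" and f :: "'a \<Rightarrow> real"
  assumes f: "linear f" and B: "B \<in> carrier_mat n nc" and x: "x \<in> carrier_vec nc"
  shows "map_vec f (map_mat of_real B *\<^sub>v x) = B *\<^sub>v map_vec f x"
proof (rule eq_vecI)
  fix i assume "i < dim_vec (B *\<^sub>v map_vec f x)"
  then have i: "i < n" using B by simp
  have "(map_mat of_real B *\<^sub>v x) $ i = (\<Sum>k<nc. B $$ (i,k) *\<^sub>R x $ k)"
    using i B x by (simp add: scalar_prod_def atLeast0LessThan scaleR_conv_of_real)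
  then show "map_vec f (map_mat of_real B *\<^sub>v x) $ i = (B *\<^sub>v map_vec f x) $ i"
    using i B x by (simp add: linear_sum[OF f] linear_scale[OF f] scalar_prod_def atLeast0LessThan)
qed (use B in simp)

lemma of_real_full_col_rank_kernel_trivial:
  fixes B :: "real mat" and x :: "complex vec"
  assumes B: "B \<in> carrier_mat n nc" and rank: "vec_space.rank n B = nc"
    and x: "x \<in> carrier_vec nc" and Bx: "map_mat of_real B *\<^sub>v x = 0\<^sub>v n"
  shows "x = 0\<^sub>v nc"
proof -
  have "map_vec f x = 0\<^sub>v nc" if "linear f" for f :: "complex \<Rightarrow> real"
  proof (rule full_col_rank_kernel_trivial[OF B rank])
    have "map_vec f (0\<^sub>v n) = 0\<^sub>v n"
      using linear_0[OF that] by (intro eq_vecI) auto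
    then show "B *\<^sub>v map_vec f x = 0\<^sub>v n"
      using map_vec_linear_of_real_mult_mat_vec[OF that B x] Bx by simp
  qed (use x in simp)
  from this[OF bounded_linear.linear[OF bounded_linear_Re]]
    this[OF bounded_linear.linear[OF bounded_linear_Im]] show ?thesis
    using x by (auto simp: Matrix.vec_eq_iff complex_eq_iff)
qed

lemma conjugate_of_real_mat_mult_vec:
  fixes B :: "real mat" and x :: "complex vec"
  assumes "B \<in> carrier_mat n nc" "x \<in> carrier_vec nc"
  shows "conjugate (map_mat of_real B *\<^sub>v x) = map_mat of_real B *\<^sub>v conjugate x"
  using assms by (intro eq_vecI) (auto simp: scalar_prod_def)

lemma quadratic_form_of_real_congruence:
  fixes B :: "real mat" and M :: "complex mat" and x :: "complex vec"
  assumes B: "B \<in> carrier_mat n m" and M: "M \<in> carrier_mat n n" and x: "x \<in> carrier_vec m"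
  shows "conjugate x \<bullet> ((transpose_mat (map_mat of_real B) * M * map_mat of_real B) *\<^sub>v x)
       = conjugate (map_mat of_real B *\<^sub>v x) \<bullet> (M *\<^sub>v (map_mat of_real B *\<^sub>v x))"
proof -
  let ?Bc = "map_mat complex_of_real B"
  let ?y = "?Bc *\<^sub>v x"
  have Bc: "?Bc \<in> carrier_mat n m" using B by simp
  have "conjugate x \<bullet> ((transpose_mat ?Bc * M * ?Bc) *\<^sub>v x)
      = conjugate x \<bullet> (transpose_mat ?Bc *\<^sub>v (M *\<^sub>v ?y))"
    using Bc M x by (simp add: assoc_mult_mat_vec[of _ m n _ m])
  also have "\<dots> = (transpose_mat ?Bc *\<^sub>v (M *\<^sub>v ?y)) \<bullet> conjugate x"
    using Bc M x by (intro comm_scalar_prod[of _ m]) auto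
  also have "\<dots> = (M *\<^sub>v ?y) \<bullet> (?Bc *\<^sub>v conjugate x)"
    using Bc M x by (intro transpose_vec_mult_scalar) auto
  also have "\<dots> = conjugate ?y \<bullet> (M *\<^sub>v ?y)"
    using B M x by (simp add: conjugate_of_real_mat_mult_vec comm_scalar_prod[of _ n])
  finally show ?thesis .
qed

lemma pos_def_cmat_of_real_congruence:
  fixes B :: "real mat" and M :: "complex mat"
  assumes B: "B \<in> carrier_mat n m" and M: "M \<in> carrier_mat n n"
    and pos: "\<And>x. x \<in> carrier_vec m \<Longrightarrow> x \<noteq> 0\<^sub>v m \<Longrightarrow>
      Im (conjugate (map_mat of_real B *\<^sub>v x) \<bullet> (M *\<^sub>v (map_mat of_real B *\<^sub>v x))) = 0 \<and>
      Re (conjugate (map_mat of_real B *\<^sub>v x) \<bullet> (M *\<^sub>v (map_mat of_real B *\<^sub>v x))) > 0"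
  shows "pos_def_cmat (transpose_mat (map_mat of_real B) * M * map_mat of_real B)"
  unfolding pos_def_cmat_def Let_def
  using B M pos quadratic_form_of_real_congruence[OF B M] by simp

lemma quadratic_form_sum_rank_one:
  fixes w :: "'z \<Rightarrow> nat \<Rightarrow> complex" and y :: "complex vec"
  assumes y: "y \<in> carrier_vec n"
  shows "conjugate y \<bullet> (mat n n (\<lambda>(i,k). r * (\<Sum>z\<in>Z. w z i * cnj (w z k))) *\<^sub>v y)
       = r * of_real (\<Sum>z\<in>Z. (cmod (\<Sum>i<n. cnj (y $ i) * w z i))\<^sup>2)"
proof -
  have "conjugate y \<bullet> (mat n n (\<lambda>(i,k). r * (\<Sum>z\<in>Z. w z i * cnj (w z k))) *\<^sub>v y)
      = r * (\<Sum>i<n. \<Sum>k<n. \<Sum>z\<in>Z. cnj (y $ i) * w z i * (cnj (w z k) * y $ k))"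
    using y by (simp add: scalar_prod_def sum_distrib_left sum_distrib_right atLeast0LessThan mult_ac)
  also have "\<dots> = r * (\<Sum>z\<in>Z. \<Sum>i<n. \<Sum>k<n. cnj (y $ i) * w z i * (cnj (w z k) * y $ k))"
    by (simp add: sum.swap[where A = Z])
  also have "\<dots> = r * (\<Sum>z\<in>Z. (\<Sum>i<n. cnj (y $ i) * w z i) * cnj (\<Sum>k<n. cnj (y $ k) * w z k))"
    unfolding cnj_sum complex_cnj_mult complex_cnj_cnj sum_product by (simp add: mult_ac)
  finally show ?thesis by (simp only: of_real_sum complex_norm_square)
qed

lemma sum_of_real_mult_mat_vec_eq_0:
  fixes B :: "real mat" and x :: "complex vec"
  assumes B: "B \<in> carrier_mat n m" and x: "x \<in> carrier_vec m"
    and col_sums: "transpose_mat B *\<^sub>v vec n (\<lambda>_. 1) = 0\<^sub>v m"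
  shows "(\<Sum>i<n. (map_mat of_real B *\<^sub>v x) $ i) = 0"
proof -
  let ?one = "vec n (\<lambda>_. 1) :: complex vec"
  have "transpose_mat (map_mat of_real B) *\<^sub>v ?one
      = map_vec of_real (transpose_mat B *\<^sub>v vec n (\<lambda>_. 1))"
    using B by (simp add: of_real_hom.mult_mat_vec_hom[of _ m n] map_mat_transpose map_vec o_def)
  also have "\<dots> = 0\<^sub>v m" using col_sums by simp
  finally have "(transpose_mat (map_mat of_real B) *\<^sub>v ?one) \<bullet> x = 0" using x by simp
  moreover have "(transpose_mat (map_mat of_real B) *\<^sub>v ?one) \<bullet> x
      = ?one \<bullet> (map_mat of_real B *\<^sub>v x)"
    using B x by (intro transpose_vec_mult_scalar) auto
  ultimately show ?thesis
    using B by (simp add: scalar_prod_def atLeast0LessThan)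
qed

definition mp_denom :: "nat \<Rightarrow> real \<Rightarrow> (nat \<Rightarrow> real) \<Rightarrow> (nat \<Rightarrow> real) \<Rightarrow> (complex \<Rightarrow> complex)
    \<Rightarrow> complex \<Rightarrow> complex" where
  "mp_denom J c \<omega> lam S z = of_real c * M0 J \<omega> lam S z - z"

lemma Im_mp_denom_neq_0:
  assumes "Im z > 0" and fixed_point: "S z = 1 / mp_denom J c \<omega> lam S z"
  shows "Im (mp_denom J c \<omega> lam S z) \<noteq> 0"
proof
  assume real: "Im (mp_denom J c \<omega> lam S z) = 0"
  have "Im (S z) = 0" using fixed_point real by (simp add: Im_divide)
  then obtain r where "S z = of_real r" by (metis complex_is_Real_iff Reals_cases)
  then have "M0 J \<omega> lam S z = of_real (\<Sum>j<J. \<omega> j * lam j / (1 + lam j * r))"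
    by (simp add: M0_def K0_def)
  then have "Im (mp_denom J c \<omega> lam S z) = - Im z" by (simp add: mp_denom_def)
  with real \<open>Im z > 0\<close> show False by simp
qed

lemma wvec_eq_resolvent_difference:
  assumes "Im z > 0" and fixed_point: "S z = 1 / mp_denom J c \<omega> lam S z"
  shows "wvec J c \<omega> lam S z j = 1 / mp_denom J c \<omega> lam S z - 1 / (mp_denom J c \<omega> lam S z + lam j)"
proof -
  define D where "D = mp_denom J c \<omega> lam S z"
  have "Im D \<noteq> 0" using Im_mp_denom_neq_0[OF assms] by (simp add: D_def)
  then have "D \<noteq> 0" and "D + lam j \<noteq> 0" by (auto simp: complex_eq_iff)
  have "wvec J c \<omega> lam S z j = v0 lam S z j / D\<^sup>2"
    by (simp add: wvec_def D_def mp_denom_def scaleR_conv_of_real)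
  also have "\<dots> = lam j / (1 + lam j / D) / D\<^sup>2"
    using fixed_point by (simp add: v0_def K0_def D_def)
  also have "\<dots> = 1 / D - 1 / (D + lam j)"
    using \<open>D \<noteq> 0\<close> \<open>D + lam j \<noteq> 0\<close> by (simp add: divide_simps power2_eq_square)
  finally show ?thesis by (simp add: D_def)
qed

lemma inj_on_mp_denom: "inj_on (mp_denom J c \<omega> lam S) {z. S z = 1 / mp_denom J c \<omega> lam S z}"
proof (rule inj_onI)
  fix z1 z2
  assume "z1 \<in> {z. S z = 1 / mp_denom J c \<omega> lam S z}" "z2 \<in> {z. S z = 1 / mp_denom J c \<omega> lam S z}"
    and eq: "mp_denom J c \<omega> lam S z1 = mp_denom J c \<omega> lam S z2"
  then have "S z1 = S z2" by simp
  then have "M0 J \<omega> lam S z1 = M0 J \<omega> lam S z2" by (simp add: M0_def K0_def)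
  with eq show "z1 = z2" by (simp add: mp_denom_def)
qed

lemma sum_wvec_eq_partial_fraction_sum:
  assumes "Im z > 0" and "S z = 1 / mp_denom J c \<omega> lam S z" and "(\<Sum>j<J. u j) = 0"
  shows "(\<Sum>j<J. u j * wvec J c \<omega> lam S z j) = - (\<Sum>j<J. u j / (mp_denom J c \<omega> lam S z + lam j))"
proof -
  have "(\<Sum>j<J. u j * wvec J c \<omega> lam S z j)
      = (\<Sum>j<J. u j) / mp_denom J c \<omega> lam S z - (\<Sum>j<J. u j / (mp_denom J c \<omega> lam S z + lam j))"
    by (simp add: wvec_eq_resolvent_difference[OF assms(1,2)] right_diff_distrib sum_subtractf
        sum_divide_distrib)
  with assms(3) show ?thesis by simp
qed

lemma ex_wvec_combination_neq_0:
  assumes lam_inj: "inj_on lam {..<J}" and Z_upper: "Z \<subseteq> {z. Im z > 0}" and Z_card: "J \<le> card Z"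
    and fixed_point: "\<And>z. z \<in> Z \<Longrightarrow> S z = 1 / mp_denom J c \<omega> lam S z"
    and sum_u: "(\<Sum>j<J. u j) = 0" and nonzero: "\<exists>j<J. u j \<noteq> 0"
  shows "\<exists>z\<in>Z. (\<Sum>j<J. u j * wvec J c \<omega> lam S z j) \<noteq> 0"
proof (rule ccontr)
  let ?D = "mp_denom J c \<omega> lam S"
  assume all_zero: "\<not> ?thesis"
  have vanish: "(\<Sum>j<J. u j / (x - - of_real (lam j))) = 0" if x: "x \<in> ?D ` Z" for x
  proof -
    obtain z where z: "z \<in> Z" "x = ?D z" using x by blast
    then have "(\<Sum>j<J. u j * wvec J c \<omega> lam S z j) = 0" using all_zero by blast
    then show ?thesis
      using sum_wvec_eq_partial_fraction_sum[OF _ fixed_point[OF z(1)] sum_u] z Z_upper by auto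
  qed
  have poles: "x \<noteq> - of_real (lam i)" if x: "x \<in> ?D ` Z" for x i
  proof -
    obtain z where z: "z \<in> Z" "x = ?D z" using x by blast
    then have "Im x \<noteq> 0" using Im_mp_denom_neq_0[OF _ fixed_point[OF z(1)]] Z_upper by auto
    then show ?thesis by auto
  qed
  have poles_inj: "inj_on (\<lambda>j. - complex_of_real (lam j)) {..<J}"
    using lam_inj by (auto simp: inj_on_def)
  have "inj_on ?D Z" using inj_on_subset[OF inj_on_mp_denom] fixed_point by blast
  then have card: "J \<le> card (?D ` Z)" using Z_card by (simp add: card_image)
  have "u j = 0" if "j < J" for j
    by (rule partial_fraction_sum_eq_0_imp_coeff_eq_0[OF poles_inj card poles vanish that])
  with nonzero show False by blast
qed

theorem proposition1:
  fixes J :: nat and c :: real and \<omega> lam :: "nat \<Rightarrow> real"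
    and Z :: "complex set" and B :: "real mat" and S :: "complex \<Rightarrow> complex"
  assumes omega_simplex: "\<forall>j<J. \<omega> j \<ge> 0" "(\<Sum>j<J. \<omega> j) = 1"
    and lambda_nonneg: "\<forall>j<J. lam j \<ge> 0"
    and lambda_distinct: "inj_on lam {..<J}"
    and c_pos: "c > 0"
    and Z_fin: "finite Z" and Z_upper: "Z \<subseteq> {z. Im z > 0}" and Z_card: "card Z \<ge> J"
    and S_stieltjes: "\<exists>\<mu>. sets \<mu> = sets borel \<and> emeasure \<mu> (space \<mu>) = 1 \<and>
                        (\<forall>z. Im z > 0 \<longrightarrow> S z = stieltjes \<mu> z)"
    and S_eq: "\<forall>z. Im z > 0 \<longrightarrow> S z = 1 / (complex_of_real c * M0 J \<omega> lam S z - z)"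
    and B_dim: "B \<in> carrier_mat J (J - 1)"
    and B_rank: "vec_space.rank J B = J - 1"
    and B_orth: "transpose_mat B *\<^sub>v vec J (\<lambda>_. 1) = 0\<^sub>v (J - 1)"
  shows "pos_def_cmat (transpose_mat (map_mat complex_of_real B) * Mmat J c \<omega> lam S Z
                        * map_mat complex_of_real B)"
proof (rule pos_def_cmat_of_real_congruence[OF B_dim])
  let ?Bc = "map_mat complex_of_real B" and ?M = "Mmat J c \<omega> lam S Z"
  let ?w = "wvec J c \<omega> lam S"
  have fixed_point: "S z = 1 / mp_denom J c \<omega> lam S z" if "z \<in> Z" for z
    using S_eq Z_upper that by (auto simp: mp_denom_def)
  show "?M \<in> carrier_mat J J" by (simp add: Mmat_def)
  fix x :: "complex vec" assume x: "x \<in> carrier_vec (J - 1)" and "x \<noteq> 0\<^sub>v (J - 1)"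
  define y where "y = ?Bc *\<^sub>v x"
  have y: "y \<in> carrier_vec J" using B_dim x by (simp add: y_def)
  have "y \<noteq> 0\<^sub>v J"
    using of_real_full_col_rank_kernel_trivial[OF B_dim B_rank x] \<open>x \<noteq> 0\<^sub>v (J - 1)\<close>
    by (auto simp: y_def)
  then have "\<exists>j<J. cnj (y $ j) \<noteq> 0" using y by (auto simp: Matrix.vec_eq_iff)
  moreover have "(\<Sum>j<J. cnj (y $ j)) = 0"
    using sum_of_real_mult_mat_vec_eq_0[OF B_dim x B_orth] by (simp add: y_def flip: cnj_sum)
  ultimately obtain z where z: "z \<in> Z" "(\<Sum>j<J. cnj (y $ j) * ?w z j) \<noteq> 0"
    using ex_wvec_combination_neq_0[OF lambda_distinct Z_upper Z_card fixed_point] by blast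
  have "conjugate y \<bullet> (?M *\<^sub>v y)
      = 1 / of_nat (card Z) * of_real (\<Sum>z\<in>Z. (cmod (\<Sum>j<J. cnj (y $ j) * ?w z j))\<^sup>2)"
    unfolding Mmat_def by (rule quadratic_form_sum_rank_one[OF y])
  moreover have "(\<Sum>z\<in>Z. (cmod (\<Sum>j<J. cnj (y $ j) * ?w z j))\<^sup>2) > 0"
    using Z_fin z by (intro sum_pos2) auto
  moreover have "card Z > 0" using Z_fin z by (auto simp: card_gt_0_iff)
  ultimately show "Im (conjugate y \<bullet> (?M *\<^sub>v y)) = 0 \<and> Re (conjugate y \<bullet> (?M *\<^sub>v y)) > 0"
    by simp
qed

end
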